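(* Let $(Y,D)$ be binary random variables and $Z$ a random vector with support $\mathrm{Supp}(Z)$. (1) (Validity.) If $(Y_0,Y_1)$ is a pair of binary random variables with $(Y_0,Y_1)$ independent of $Z$ and $(Y,D,Y_0,Y_1)$ satisfying the binary Roy model (or the alternative binary Roy model for some latent $(Y_0^\ast,Y_1^\ast)$ with $(Y_0,Y_1)$ independent of $Z$), then for almost all $z\in\mathrm{Supp}(Z)$: $$0\le \mathbb P(Y_0=1,Y_1=0)\le \mathbb P(Y=1,D=0\mid Z=z),\quad 0\le \mathbb P(Y_0=0,Y_1=1)\le \mathbb P(Y=1,D=1\mid Z=z),\quad \mathbb P(Y_0=0,Y_1=0)=\mathbb P(Y=0).$$ (2) (Sharpness.) Suppose $Y$ is independent of $Z$. If $(p_{00},p_{01},p_{10})$ satisfies $0\le p_{10}\le \mathbb P(Y=1,D=0\mid Z=z)$, $0\le p_{01}\le \mathbb P(Y=1,D=1\mid Z=z)$ for almost all $z\in\mathrm{Supp}(Z)$ and $p_{00}=\mathbb P(Y=0)$, then there exist random variables $(\tilde Y,\tilde D,\tilde Z,Y_0,Y_1)$ on some probability space with $(\tilde Y,\tilde D,\tilde Z)$ distributed as $(Y,D,Z)$, $(Y_0,Y_1)$ binary and independent of $\tilde Z$, $(\tilde Y,\tilde D,Y_0,Y_1)$ satisfying the binary Roy model (hence also the alternative binary Roy model), and $\mathbb P(Y_0=0,Y_1=0)=p_{00}$, $\mathbb P(Y_0=0,Y_1=1)=p_{01}$, $\mathbb P(Y_0=1,Y_1=0)=p_{10}$.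
   Context: All random variables are defined on a common probability space. Binary Roy model: $Y_0,Y_1\in\{0,1\}$, $Y=Y_1D+Y_0(1-D)$, and almost surely $Y_1>Y_0\Rightarrow D=1$, $Y_1<Y_0\Rightarrow D=0$. Alternative binary Roy model: $Y=Y_1D+Y_0(1-D)$, $Y_d=1\{Y_d^\ast>0\}$ for real random variables $(Y_0^\ast,Y_1^\ast)$, and almost surely $Y_1^\ast>Y_0^\ast\Rightarrow D=1$, $Y_1^\ast<Y_0^\ast\Rightarrow D=0$. $Z$ is an observed variable affecting sector selection only, i.e. $(Y_0,Y_1)$ is independent of $Z$; there are no sector-specific covariates. The support of a random vector is the set of points all of whose neighbourhoods have positive probability. *)

theory Defs
  imports "HOL-Probability.Probability"
begin

definition rv_support :: "'a measure \<Rightarrow> ('a \<Rightarrow> 'z::topological_space) \<Rightarrow> 'z set" where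
  "rv_support M Z = {z. \<forall>U. open U \<and> z \<in> U \<longrightarrow> measure M (Z -` U \<inter> space M) > 0}"

definition cond_prob_version ::
  "'a measure \<Rightarrow> ('a \<Rightarrow> 'z::topological_space) \<Rightarrow> 'a set \<Rightarrow> ('z \<Rightarrow> real) \<Rightarrow> bool" where
  "cond_prob_version M Z A g \<longleftrightarrow>
     g \<in> borel_measurable borel \<and> integrable M (\<lambda>\<omega>. g (Z \<omega>)) \<and>
     (\<forall>B \<in> sets borel. measure M (A \<inter> Z -` B \<inter> space M) =
                        set_lebesgue_integral M (Z -` B \<inter> space M) (\<lambda>\<omega>. g (Z \<omega>)))"

text \<open>Binary Roy model (booleans encode 0/1): Y = Y1 D + Y0 (1 - D), and a.s.
  Y1 > Y0 implies D = 1, Y1 < Y0 implies D = 0.\<close>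
definition roy_model ::
  "'a measure \<Rightarrow> ('a \<Rightarrow> bool) \<Rightarrow> ('a \<Rightarrow> bool) \<Rightarrow> ('a \<Rightarrow> bool) \<Rightarrow> ('a \<Rightarrow> bool) \<Rightarrow> bool" where
  "roy_model M Y D Y0 Y1 \<longleftrightarrow>
     (\<forall>\<omega>\<in>space M. Y \<omega> = (if D \<omega> then Y1 \<omega> else Y0 \<omega>)) \<and>
     (AE \<omega> in M. ((Y1 \<omega> \<and> \<not> Y0 \<omega>) \<longrightarrow> D \<omega>) \<and> ((Y0 \<omega> \<and> \<not> Y1 \<omega>) \<longrightarrow> \<not> D \<omega>))"

definition alt_roy_model ::
  "'a measure \<Rightarrow> ('a \<Rightarrow> bool) \<Rightarrow> ('a \<Rightarrow> bool) \<Rightarrow> ('a \<Rightarrow> bool) \<Rightarrow> ('a \<Rightarrow> bool)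
   \<Rightarrow> ('a \<Rightarrow> real) \<Rightarrow> ('a \<Rightarrow> real) \<Rightarrow> bool" where
  "alt_roy_model M Y D Y0 Y1 Y0s Y1s \<longleftrightarrow>
     (\<forall>\<omega>\<in>space M. Y \<omega> = (if D \<omega> then Y1 \<omega> else Y0 \<omega>)) \<and>
     (\<forall>\<omega>\<in>space M. Y0 \<omega> = (Y0s \<omega> > 0) \<and> Y1 \<omega> = (Y1s \<omega> > 0)) \<and>
     (AE \<omega> in M. (Y1s \<omega> > Y0s \<omega> \<longrightarrow> D \<omega>) \<and> (Y1s \<omega> < Y0s \<omega> \<longrightarrow> \<not> D \<omega>))"

text \<open>Independence of two random variables with possibly different codomains
  (the library's indep_var requires a common codomain type).\<close>
definition indep_rv ::
  "'a measure \<Rightarrow> 'b measure \<Rightarrow> ('a \<Rightarrow> 'b) \<Rightarrow> 'c measure \<Rightarrow> ('a \<Rightarrow> 'c) \<Rightarrow> bool" where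
  "indep_rv M Ma X Mb W \<longleftrightarrow>
     X \<in> measurable M Ma \<and> W \<in> measurable M Mb \<and>
     (\<forall>A \<in> sets Ma. \<forall>B \<in> sets Mb.
        measure M (X -` A \<inter> W -` B \<inter> space M) =
        measure M (X -` A \<inter> space M) * measure M (W -` B \<inter> space M))"

end

theory Submission
  imports Defs
begin

text \<open>
  Validity: under the Roy model a unit of latent type (Y0, Y1) = (1, 0) is almost surely observed
  with Y = 1 and D = 0. As the type is independent of Z, for every Borel set B
  P(Y0 = 1, Y1 = 0) P(Z \<in> B) \<le> P(Y = 1, D = 0, Z \<in> B) = E[g10(Z); Z \<in> B],
  which forces P(Y0 = 1, Y1 = 0) \<le> g10 almost everywhere; symmetrically for the type (0, 1),
  and the type (0, 0) coincides almost surely with the event Y = 0.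

  Sharpness: enlarge the probability space by a latent type drawn from a conditional law given
  (Y, D, Z). Units with Y = 0 get type (0, 0); units with Y = 1, D = 0 get type (1, 0) with
  probability p10 / g10(Z) and type (1, 1) otherwise, and symmetrically for D = 1. Then
  P(type (1, 0), Z \<in> B) = E[g10(Z) p10 / g10(Z); Z \<in> B] = p10 P(Z \<in> B), and the independence
  of Y and Z does the same for the type (0, 0); so the type is independent of Z with the
  prescribed law, while (Y, D, Z) keeps its distribution.
\<close>

lemma integral_indicator_vimage:
  assumes "finite_measure M" and [measurable]: "Z \<in> measurable M L" "B \<in> sets L"
  shows "(\<integral>\<omega>. indicator B (Z \<omega>) \<partial>M) = (measure M (Z -` B \<inter> space M) :: real)"
proof -
  interpret finite_measure M by fact
  have "(\<integral>\<omega>. indicator B (Z \<omega>) \<partial>M) = (\<integral>\<omega>. indicator (Z -` B \<inter> space M) \<omega> \<partial>M :: real)"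
    by (intro Bochner_Integration.integral_cong) (auto simp: indicator_def)
  then show ?thesis
    using measurable_sets[OF assms(2,3)] by simp
qed

lemma indep_rv_measure_eq:
  assumes "indep_rv M (count_space UNIV) X borel Z" and "B \<in> sets borel"
  shows "measure M ({\<omega>\<in>space M. X \<omega> = c} \<inter> Z -` B \<inter> space M)
    = measure M {\<omega>\<in>space M. X \<omega> = c} * measure M (Z -` B \<inter> space M)"
proof -
  have "{\<omega>\<in>space M. X \<omega> = c} = X -` {c} \<inter> space M"
    and "{\<omega>\<in>space M. X \<omega> = c} \<inter> Z -` B \<inter> space M = X -` {c} \<inter> Z -` B \<inter> space M"
    by auto
  with assms show ?thesis
    unfolding indep_rv_def by simp
qed

lemma AE_in_rv_support:
  fixes Z :: "'a \<Rightarrow> 'z::second_countable_topology"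
  assumes "finite_measure M" and Z: "Z \<in> borel_measurable M"
  shows "AE z in distr M borel Z. z \<in> rv_support M Z"
proof -
  interpret finite_measure M by fact
  obtain \<B> :: "'z set set" where \<B>: "countable \<B>" "\<And>C. C \<in> \<B> \<Longrightarrow> open C"
     "\<And>S. open S \<Longrightarrow> \<exists>U. U \<subseteq> \<B> \<and> S = \<Union>U"
    by (rule univ_second_countable) blast
  let ?null = "{C\<in>\<B>. measure M (Z -` C \<inter> space M) = 0}"
  have "(\<Union>C\<in>?null. C) \<in> null_sets (distr M borel Z)"
  proof (rule null_sets_UN')
    show "countable ?null" using \<B>(1) by auto
    fix C assume C: "C \<in> ?null"
    then have "C \<in> sets borel" using \<B>(2) by auto
    with C Z show "C \<in> null_sets (distr M borel Z)"
      by (simp add: null_sets_def emeasure_distr emeasure_eq_measure)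
  qed
  moreover have "{z \<in> space (distr M borel Z). z \<notin> rv_support M Z} \<subseteq> (\<Union>C\<in>?null. C)"
  proof
    fix z assume "z \<in> {z \<in> space (distr M borel Z). z \<notin> rv_support M Z}"
    then obtain U where U: "open U" "z \<in> U" "measure M (Z -` U \<inter> space M) = 0"
      by (auto simp: rv_support_def order.strict_iff_order)
    obtain C where C: "C \<in> \<B>" "z \<in> C" "C \<subseteq> U" using \<B>(3)[OF U(1)] U(2) by blast
    have "measure M (Z -` C \<inter> space M) \<le> measure M (Z -` U \<inter> space M)"
      using C U(1) Z by (intro finite_measure_mono) (auto intro: measurable_sets borel_open)
    with U(3) C show "z \<in> (\<Union>C\<in>?null. C)" by (auto intro!: antisym)
  qed
  ultimately show ?thesis by (rule AE_I')
qed

lemma AE_ge_of_set_integral_ge: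
  fixes Z :: "'a \<Rightarrow> 'z::topological_space" and g :: "'z \<Rightarrow> real"
  assumes "finite_measure M" and [measurable]: "Z \<in> borel_measurable M" "g \<in> borel_measurable borel"
    and g: "integrable M (\<lambda>\<omega>. g (Z \<omega>))"
    and ge: "\<And>B. B \<in> sets borel \<Longrightarrow> c * measure M (Z -` B \<inter> space M) \<le>
                 set_lebesgue_integral M (Z -` B \<inter> space M) (\<lambda>\<omega>. g (Z \<omega>))"
  shows "AE \<omega> in M. c \<le> g (Z \<omega>)"
proof -
  interpret finite_measure M by fact
  define A where "A = Z -` {z. g z < c} \<inter> space M"
  have [measurable]: "{z. g z < c} \<in> sets borel" "A \<in> sets M"
    unfolding A_def by measurable
  define h where "h \<omega> = indicator A \<omega> * (c - g (Z \<omega>))" for \<omega>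
  have h_nonneg: "0 \<le> h \<omega>" for \<omega> by (auto simp: h_def A_def indicator_def)
  have "integrable M (\<lambda>\<omega>. indicator A \<omega> * g (Z \<omega>))"
    using integrable_real_mult_indicator[OF \<open>A \<in> sets M\<close> g] by (simp add: mult.commute)
  then have "integral\<^sup>L M h = c * measure M A - set_lebesgue_integral M A (\<lambda>\<omega>. g (Z \<omega>))"
    unfolding h_def right_diff_distrib set_lebesgue_integral_def
    by (subst Bochner_Integration.integral_diff) (auto simp: mult.commute emeasure_eq_measure)
  also have "\<dots> \<le> 0" using ge[of "{z. g z < c}"] by (simp add: A_def)
  finally have "integral\<^sup>L M h = 0"
    using integral_nonneg_AE[of h M] h_nonneg by (simp add: antisym)
  moreover have "integrable M h"
    using \<open>integrable M (\<lambda>\<omega>. indicator A \<omega> * g (Z \<omega>))\<close>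
    unfolding h_def right_diff_distrib by (auto simp: emeasure_eq_measure)
  ultimately have "AE \<omega> in M. h \<omega> = 0" by (simp add: integral_nonneg_eq_0_iff_AE h_nonneg)
  then show ?thesis
    using AE_space by eventually_elim (auto simp: h_def A_def indicator_def split: if_splits)
qed

section \<open>Versions of conditional probabilities given Z\<close>

lemma cond_prob_version_nonneg:
  fixes Z :: "'a \<Rightarrow> 'z::topological_space"
  assumes "finite_measure M" and "Z \<in> borel_measurable M" and g: "cond_prob_version M Z E g"
  shows "AE \<omega> in M. 0 \<le> g (Z \<omega>)"
proof (rule AE_ge_of_set_integral_ge[where c=0 and Z=Z and g=g])
  fix B :: "'z set" assume "B \<in> sets borel"
  then show "0 * measure M (Z -` B \<inter> space M)
      \<le> set_lebesgue_integral M (Z -` B \<inter> space M) (\<lambda>\<omega>. g (Z \<omega>))"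
    using g measure_nonneg[of M "E \<inter> Z -` B \<inter> space M"] by (simp add: cond_prob_version_def)
qed (use assms in \<open>auto simp: cond_prob_version_def\<close>)

lemma prob_le_cond_prob_version:
  fixes Z :: "'a \<Rightarrow> 'z::topological_space"
  assumes "finite_measure M" and [measurable]: "Z \<in> borel_measurable M"
    and g: "cond_prob_version M Z E g" and [measurable]: "E \<in> sets M"
    and F_E: "AE \<omega> in M. \<omega> \<in> F \<longrightarrow> \<omega> \<in> E"
    and F_indep: "\<And>B. B \<in> sets borel \<Longrightarrow>
      measure M (F \<inter> Z -` B \<inter> space M) = measure M F * measure M (Z -` B \<inter> space M)"
  shows "AE z in distr M borel Z. measure M F \<le> g z"
proof -
  interpret finite_measure M by fact
  have "AE \<omega> in M. measure M F \<le> g (Z \<omega>)"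
  proof (rule AE_ge_of_set_integral_ge[where Z=Z and g=g])
    fix B :: "'z set" assume B[measurable]: "B \<in> sets borel"
    have "measure M F * measure M (Z -` B \<inter> space M) \<le> measure M (E \<inter> Z -` B \<inter> space M)"
      unfolding F_indep[OF B, symmetric] using F_E
      by (intro finite_measure_mono_AE) (auto elim!: eventually_mono)
    then show "measure M F * measure M (Z -` B \<inter> space M)
        \<le> set_lebesgue_integral M (Z -` B \<inter> space M) (\<lambda>\<omega>. g (Z \<omega>))"
      using g B by (simp add: cond_prob_version_def)
  qed (use assms in \<open>auto simp: cond_prob_version_def\<close>)
  then show ?thesis
    using g by (subst AE_distr_iff) (auto simp: cond_prob_version_def)
qed

lemma distr_restrict_eq_density_cond_prob_version:
  fixes Z :: "'a \<Rightarrow> 'z::topological_space"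
  assumes "finite_measure M" and [measurable]: "Z \<in> borel_measurable M" "E \<in> sets M"
    and g: "cond_prob_version M Z E g"
  shows "distr (density M (indicator E)) borel Z = density (distr M borel Z) g"
proof (rule measure_eqI)
  interpret finite_measure M by fact
  have [measurable]: "g \<in> borel_measurable borel" and g_int: "integrable M (\<lambda>\<omega>. g (Z \<omega>))"
    using g by (auto simp: cond_prob_version_def)
  have g_nonneg: "AE \<omega> in M. 0 \<le> g (Z \<omega>)"
    by (rule cond_prob_version_nonneg[OF assms(1,2) g])
  fix B assume "B \<in> sets (distr (density M (indicator E)) borel Z)"
  then have B[measurable]: "B \<in> sets borel" by simp
  have g_B_int: "integrable M (\<lambda>\<omega>. g (Z \<omega>) * indicator B (Z \<omega>))"
    by (rule Bochner_Integration.integrable_bound[OF g_int]) (auto simp: indicator_def)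
  have "emeasure (distr (density M (indicator E)) borel Z) B
      = (\<integral>\<^sup>+ \<omega>. indicator E \<omega> * indicator (Z -` B \<inter> space M) \<omega> \<partial>M)"
    by (simp add: emeasure_distr emeasure_density)
  also have "\<dots> = (\<integral>\<^sup>+ \<omega>. indicator (E \<inter> Z -` B \<inter> space M) \<omega> \<partial>M)"
    by (auto intro!: nn_integral_cong simp: indicator_def)
  also have "\<dots> = emeasure M (E \<inter> Z -` B \<inter> space M)"
    by simp
  also have "\<dots> = ennreal (\<integral>\<omega>. g (Z \<omega>) * indicator B (Z \<omega>) \<partial>M)"
    using g B unfolding emeasure_eq_measure cond_prob_version_def set_lebesgue_integral_def
    by (auto intro!: arg_cong[where f=ennreal] Bochner_Integration.integral_cong
             simp: indicator_def)
  also have "\<dots> = (\<integral>\<^sup>+ \<omega>. ennreal (g (Z \<omega>)) * indicator B (Z \<omega>) \<partial>M)"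
    using g_nonneg
    by (subst nn_integral_eq_integral[symmetric, OF g_B_int])
       (auto intro!: nn_integral_cong simp: indicator_def)
  also have "\<dots> = emeasure (density (distr M borel Z) g) B"
    by (simp add: emeasure_density nn_integral_distr)
  finally show "emeasure (distr (density M (indicator E)) borel Z) B
      = emeasure (density (distr M borel Z) g) B" .
qed simp

lemma integral_indicator_mult_cond_prob_version:
  fixes Z :: "'a \<Rightarrow> 'z::topological_space" and h :: "'z \<Rightarrow> real"
  assumes "finite_measure M" and [measurable]: "Z \<in> borel_measurable M" "E \<in> sets M"
    and g: "cond_prob_version M Z E g" and [measurable]: "h \<in> borel_measurable borel"
  shows "(\<integral>\<omega>. indicator E \<omega> * h (Z \<omega>) \<partial>M) = (\<integral>\<omega>. g (Z \<omega>) * h (Z \<omega>) \<partial>M)"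
proof -
  have [measurable]: "g \<in> borel_measurable borel"
    using g by (simp add: cond_prob_version_def)
  have g_nonneg: "AE z in distr M borel Z. 0 \<le> g z"
    using cond_prob_version_nonneg[OF assms(1,2) g] by (subst AE_distr_iff) auto
  have "(\<integral>\<omega>. indicator E \<omega> * h (Z \<omega>) \<partial>M) = integral\<^sup>L (density M (indicator E)) (\<lambda>\<omega>. h (Z \<omega>))"
    using integral_density[of "\<lambda>\<omega>. h (Z \<omega>)" M "indicator E"] by (simp add: ennreal_indicator)
  also have "\<dots> = integral\<^sup>L (distr (density M (indicator E)) borel Z) h"
    by (subst integral_distr) auto
  also have "\<dots> = integral\<^sup>L (density (distr M borel Z) g) h"
    by (simp add: distr_restrict_eq_density_cond_prob_version[OF assms(1-3) g])
  also have "\<dots> = (\<integral>z. g z * h z \<partial>distr M borel Z)"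
    using g_nonneg by (subst integral_density) auto
  also have "\<dots> = (\<integral>\<omega>. g (Z \<omega>) * h (Z \<omega>) \<partial>M)"
    by (subst integral_distr) auto
  finally show ?thesis .
qed

text \<open>
  Retaining each unit of an event with conditional probability g independently with probability
  p / g thins it to conditional probability p. Clamping makes this a probability even off the
  event p \<le> g, where its value does not matter.
\<close>

definition thinning_prob :: "real \<Rightarrow> real \<Rightarrow> real" where
  "thinning_prob p g = max 0 (min 1 (p / g))"

lemma thinning_prob_bounds: "0 \<le> thinning_prob p g" "thinning_prob p g \<le> 1"
  by (auto simp: thinning_prob_def)

lemma mult_thinning_prob: "0 \<le> p \<Longrightarrow> p \<le> g \<Longrightarrow> g * thinning_prob p g = p"
  by (cases "p = 0") (auto simp: thinning_prob_def)

lemma integral_thinned_indicator: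
  fixes Z :: "'a \<Rightarrow> 'z::topological_space"
  assumes "finite_measure M" and [measurable]: "Z \<in> borel_measurable M" "E \<in> sets M"
    and g: "cond_prob_version M Z E g" and "0 \<le> p" and p_le: "AE \<omega> in M. p \<le> g (Z \<omega>)"
    and [measurable]: "B \<in> sets borel"
  shows "(\<integral>\<omega>. indicator E \<omega> * (thinning_prob p (g (Z \<omega>)) * indicator B (Z \<omega>)) \<partial>M)
    = p * measure M (Z -` B \<inter> space M)"
proof -
  interpret finite_measure M by fact
  have [measurable]: "g \<in> borel_measurable borel"
    using g by (simp add: cond_prob_version_def)
  then have [measurable]: "(\<lambda>z. thinning_prob p (g z)) \<in> borel_measurable borel"
    unfolding thinning_prob_def by measurable
  have "(\<integral>\<omega>. indicator E \<omega> * (thinning_prob p (g (Z \<omega>)) * indicator B (Z \<omega>)) \<partial>M)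
      = (\<integral>\<omega>. g (Z \<omega>) * (thinning_prob p (g (Z \<omega>)) * indicator B (Z \<omega>)) \<partial>M)"
    by (rule integral_indicator_mult_cond_prob_version[OF assms(1-4)]) measurable
  also have "\<dots> = (\<integral>\<omega>. p * indicator B (Z \<omega>) \<partial>M)"
    using p_le \<open>0 \<le> p\<close>
    by (intro integral_cong_AE)
       (auto elim!: eventually_mono simp: mult_thinning_prob mult.assoc[symmetric])
  also have "\<dots> = p * measure M (Z -` B \<inter> space M)"
    by (simp add: integral_indicator_vimage[OF assms(1,2,7)])
  finally show ?thesis .
qed

section \<open>Randomisation by a kernel with finitely many outcomes\<close>

definition compound_measure :: "'a measure \<Rightarrow> ('a \<Rightarrow> 'b \<Rightarrow> real) \<Rightarrow> ('a \<times> 'b) measure" where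
  "compound_measure M w = density (M \<Otimes>\<^sub>M count_space UNIV) (\<lambda>x. ennreal (w (fst x) (snd x)))"

locale finite_kernel = prob_space M for M :: "'a measure" +
  fixes w :: "'a \<Rightarrow> 'b::finite \<Rightarrow> real"
  assumes measurable_weight[measurable]: "\<And>t. (\<lambda>\<omega>. w \<omega> t) \<in> borel_measurable M"
    and weight_nonneg: "\<And>\<omega> t. 0 \<le> w \<omega> t"
    and sum_weight: "\<And>\<omega>. (\<Sum>t\<in>UNIV. w \<omega> t) = 1"
begin

abbreviation "N \<equiv> compound_measure M w"

lemma weight_le_1: "w \<omega> t \<le> 1"
  using member_le_sum[of t UNIV "w \<omega>"] weight_nonneg sum_weight by simp

lemma measurable_compound_weight[measurable]:
  "(\<lambda>x. ennreal (w (fst x) (snd x))) \<in> borel_measurable (M \<Otimes>\<^sub>M count_space UNIV)"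
  by (rule measurable_compose_countable'[where g=snd and I=UNIV]) auto

lemma sets_compound_measure[simp]: "sets N = sets (M \<Otimes>\<^sub>M count_space UNIV)"
  by (simp add: compound_measure_def)

lemma space_compound_measure[simp]: "space N = space M \<times> UNIV"
  by (simp add: compound_measure_def space_pair_measure)

lemma measurable_compound_measure[simp]:
  "measurable N L = measurable (M \<Otimes>\<^sub>M count_space UNIV) L"
  by (rule measurable_cong_sets) auto

lemma measurable_compound_fst: "g \<in> measurable M L \<Longrightarrow> (\<lambda>x. g (fst x)) \<in> measurable N L"
  by (simp add: measurable_compose[OF measurable_fst])

lemma measurable_compound_snd: "(\<lambda>x. f (snd x)) \<in> measurable N (count_space UNIV)"
  by (simp add: measurable_compose[OF measurable_snd measurable_count_space])

lemma emeasure_compound_measure: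
  assumes [measurable]: "S \<in> sets (M \<Otimes>\<^sub>M count_space UNIV)"
  shows "emeasure N S = (\<integral>\<^sup>+ \<omega>. ennreal (\<Sum>t\<in>UNIV. w \<omega> t * indicator S (\<omega>, t)) \<partial>M)"
proof -
  interpret count: sigma_finite_measure "count_space (UNIV :: 'b set)"
    by (rule sigma_finite_measure_count_space_finite) simp
  have "emeasure N S
      = (\<integral>\<^sup>+ x. ennreal (w (fst x) (snd x)) * indicator S x \<partial>(M \<Otimes>\<^sub>M count_space UNIV))"
    unfolding compound_measure_def by (rule emeasure_density) measurable
  also have "\<dots> = (\<integral>\<^sup>+ \<omega>. \<integral>\<^sup>+ t. ennreal (w \<omega> t) * indicator S (\<omega>, t) \<partial>count_space UNIV \<partial>M)"
    by (subst count.nn_integral_fst[symmetric]) auto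
  also have "\<dots> = (\<integral>\<^sup>+ \<omega>. ennreal (\<Sum>t\<in>UNIV. w \<omega> t * indicator S (\<omega>, t)) \<partial>M)"
  proof (intro nn_integral_cong)
    fix \<omega>
    have "ennreal (w \<omega> t) * indicator S (\<omega>, t) = ennreal (w \<omega> t * indicator S (\<omega>, t))" for t
      by (simp add: indicator_def)
    then show "(\<integral>\<^sup>+ t. ennreal (w \<omega> t) * indicator S (\<omega>, t) \<partial>count_space UNIV)
        = ennreal (\<Sum>t\<in>UNIV. w \<omega> t * indicator S (\<omega>, t))"
      by (simp add: nn_integral_count_space_finite weight_nonneg sum_ennreal)
  qed
  finally show ?thesis .
qed

lemma AE_compound_measureI:
  assumes "\<And>\<omega> t. \<omega> \<in> space M \<Longrightarrow> 0 < w \<omega> t \<Longrightarrow> P (\<omega>, t)"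
  shows "AE x in N. P x"
  unfolding compound_measure_def AE_density[OF measurable_compound_weight]
  using assms by (auto simp: space_pair_measure)

lemma prob_space_compound_measure: "prob_space N"
proof
  have "emeasure N (space M \<times> UNIV) = (\<integral>\<^sup>+ \<omega>. 1 \<partial>M)"
  proof (subst emeasure_compound_measure, simp, rule nn_integral_cong)
    fix \<omega> assume "\<omega> \<in> space M"
    then show "ennreal (\<Sum>t\<in>UNIV. w \<omega> t * indicator (space M \<times> UNIV) (\<omega>, t)) = 1"
      by (simp add: sum_weight)
  qed
  then show "emeasure N (space N) = 1" by (simp add: emeasure_space_1)
qed

lemma measure_compound_measure:
  assumes [measurable]: "S \<in> sets (M \<Otimes>\<^sub>M count_space UNIV)"
  shows "measure N S = (\<integral>\<omega>. (\<Sum>t\<in>UNIV. w \<omega> t * indicator S (\<omega>, t)) \<partial>M)"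
proof -
  have bounded: "0 \<le> (\<Sum>t\<in>UNIV. w \<omega> t * indicator S (\<omega>, t))"
    "(\<Sum>t\<in>UNIV. w \<omega> t * indicator S (\<omega>, t)) \<le> 1" for \<omega>
    using sum_mono[of UNIV "\<lambda>t. w \<omega> t * indicator S (\<omega>, t)" "w \<omega>"]
    by (auto intro!: sum_nonneg simp: weight_nonneg sum_weight indicator_def)
  have "(\<lambda>\<omega>. \<Sum>t\<in>UNIV. w \<omega> t * indicator S (\<omega>, t)) \<in> borel_measurable M"
    by measurable
  then have "integrable M (\<lambda>\<omega>. \<Sum>t\<in>UNIV. w \<omega> t * indicator S (\<omega>, t))"
    using bounded by (intro integrable_const_bound[where B=1]) auto
  then show ?thesis
    using bounded unfolding measure_def emeasure_compound_measure[OF assms]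
    by (subst nn_integral_eq_integral) (auto intro: integral_nonneg)
qed

lemma distr_fst_compound_measure: "distr N M fst = M"
proof (rule measure_eqI)
  fix A assume "A \<in> sets (distr N M fst)"
  then have [measurable]: "A \<in> sets M" by simp
  have "fst -` A \<inter> space N = A \<times> UNIV"
    using sets.sets_into_space[of A M] by auto
  then have "emeasure (distr N M fst) A = emeasure N (A \<times> UNIV)"
    by (subst emeasure_distr) auto
  also have "\<dots> = (\<integral>\<^sup>+ \<omega>. indicator A \<omega> \<partial>M)"
    by (subst emeasure_compound_measure)
       (auto intro!: nn_integral_cong
             simp: indicator_times sum_distrib_right[symmetric] sum_weight ennreal_indicator)
  finally show "emeasure (distr N M fst) A = emeasure M A" by simp
qed simp

lemma distr_compound_measure_eq_distr:
  assumes "AE x in N. f x = g (fst x)"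
    and [measurable]: "f \<in> measurable N L" "g \<in> measurable M L"
  shows "distr N L f = distr M L g"
proof -
  have "distr N L f = distr N L (\<lambda>x. g (fst x))"
    using assms by (intro distr_cong_AE) auto
  also have "\<dots> = distr (distr N M fst) L g"
    by (subst distr_distr) (auto simp: comp_def)
  finally show ?thesis by (simp add: distr_fst_compound_measure)
qed

context
  fixes Z :: "'a \<Rightarrow> 'z::topological_space" and \<kappa> :: "'b \<Rightarrow> real"
  assumes measurable_covariate[measurable]: "Z \<in> borel_measurable M"
    and integral_weight_covariate: "\<And>t B. B \<in> sets borel \<Longrightarrow>
      (\<integral>\<omega>. w \<omega> t * indicator B (Z \<omega>) \<partial>M) = \<kappa> t * measure M (Z -` B \<inter> space M)"
begin

lemma measure_snd_covariate:
  assumes [measurable]: "B \<in> sets borel"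
  shows "measure N (snd -` A \<inter> (\<lambda>x. Z (fst x)) -` B \<inter> space N)
    = sum \<kappa> A * measure M (Z -` B \<inter> space M)"
proof -
  let ?S = "snd -` A \<inter> (\<lambda>x. Z (fst x)) -` B \<inter> space N"
  have "?S = {x \<in> space (M \<Otimes>\<^sub>M count_space UNIV). snd x \<in> A \<and> Z (fst x) \<in> B}"
    by (auto simp: space_pair_measure)
  also have "\<dots> \<in> sets (M \<Otimes>\<^sub>M count_space UNIV)"
    by measurable
  finally have [measurable]: "?S \<in> sets (M \<Otimes>\<^sub>M count_space UNIV)" .
  have "measure N ?S = (\<integral>\<omega>. (\<Sum>t\<in>A. w \<omega> t * indicator B (Z \<omega>)) \<partial>M)"
    unfolding measure_compound_measure[OF \<open>?S \<in> _\<close>]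
    by (intro Bochner_Integration.integral_cong refl)
       (auto simp: indicator_def sum.If_cases Int_absorb1)
  also have "\<dots> = (\<Sum>t\<in>A. \<integral>\<omega>. w \<omega> t * indicator B (Z \<omega>) \<partial>M)"
    using weight_nonneg weight_le_1
    by (intro Bochner_Integration.integral_sum integrable_const_bound[where B=1])
       (auto simp: indicator_def)
  also have "\<dots> = sum \<kappa> A * measure M (Z -` B \<inter> space M)"
    by (simp add: integral_weight_covariate sum_distrib_right)
  finally show ?thesis .
qed

lemma measure_snd: "measure N (snd -` A \<inter> space N) = sum \<kappa> A"
proof -
  have "snd -` A \<inter> space N = snd -` A \<inter> (\<lambda>x. Z (fst x)) -` UNIV \<inter> space N"
    by auto
  then show ?thesis
    by (simp only: measure_snd_covariate[OF space_in_borel]) (simp add: prob_space)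
qed

lemma sum_covariate_law: "sum \<kappa> UNIV = 1"
proof -
  interpret N: prob_space N by (rule prob_space_compound_measure)
  show ?thesis
    using measure_snd[of UNIV] N.prob_space by (simp add: prob_space)
qed

lemma indep_rv_snd_covariate: "indep_rv N (count_space UNIV) snd borel (\<lambda>x. Z (fst x))"
  unfolding indep_rv_def
proof (intro conjI ballI)
  fix A :: "'b set" and B :: "'z set" assume "B \<in> sets borel"
  moreover have "snd -` A \<inter> space N = snd -` A \<inter> (\<lambda>x. Z (fst x)) -` UNIV \<inter> space N"
    "(\<lambda>x. Z (fst x)) -` B \<inter> space N = snd -` UNIV \<inter> (\<lambda>x. Z (fst x)) -` B \<inter> space N"
    by auto
  ultimately show "measure N (snd -` A \<inter> (\<lambda>x. Z (fst x)) -` B \<inter> space N)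
      = measure N (snd -` A \<inter> space N) * measure N ((\<lambda>x. Z (fst x)) -` B \<inter> space N)"
    by (simp only: measure_snd_covariate space_in_borel) (simp add: sum_covariate_law prob_space)
qed auto

end

end

section \<open>Latent types of the binary Roy model\<close>

definition roy_type_weight :: "bool \<Rightarrow> bool \<Rightarrow> real \<Rightarrow> real \<Rightarrow> bool \<times> bool \<Rightarrow> real" where
  "roy_type_weight y d a b t =
    (if t = (False, False) then of_bool (\<not> y)
     else if t = (False, True) then of_bool (y \<and> d) * b
     else if t = (True, False) then of_bool (y \<and> \<not> d) * a
     else of_bool y * (if d then 1 - b else 1 - a))"

definition roy_type_law :: "real \<Rightarrow> real \<Rightarrow> real \<Rightarrow> bool \<times> bool \<Rightarrow> real" where
  "roy_type_law p00 p01 p10 t =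
    (if t = (False, False) then p00 else if t = (False, True) then p01
     else if t = (True, False) then p10 else 1 - p00 - p01 - p10)"

lemma UNIV_bool_pair:
  "(UNIV :: (bool \<times> bool) set) = {(False, False), (False, True), (True, False), (True, True)}"
  by auto

lemma roy_type_weight_nonneg:
  "0 \<le> a \<Longrightarrow> a \<le> 1 \<Longrightarrow> 0 \<le> b \<Longrightarrow> b \<le> 1 \<Longrightarrow> 0 \<le> roy_type_weight y d a b t"
  by (auto simp: roy_type_weight_def)

lemma roy_type_weight_le_1:
  "0 \<le> a \<Longrightarrow> a \<le> 1 \<Longrightarrow> 0 \<le> b \<Longrightarrow> b \<le> 1 \<Longrightarrow> roy_type_weight y d a b t \<le> 1"
  by (auto simp: roy_type_weight_def)

lemma sum_roy_type_weight: "(\<Sum>t\<in>UNIV. roy_type_weight y d a b t) = 1"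
  by (simp add: UNIV_bool_pair roy_type_weight_def)

lemma roy_type_weight_pos_imp:
  assumes "0 < roy_type_weight y d a b (y0, y1)"
  shows "y = (if d then y1 else y0) \<and> (y1 \<and> \<not> y0 \<longrightarrow> d) \<and> (y0 \<and> \<not> y1 \<longrightarrow> \<not> d)"
  using assms by (cases y; cases d; cases y0; cases y1) (auto simp: roy_type_weight_def)

lemma integral_roy_type_weight:
  fixes Z :: "'a \<Rightarrow> 'z::topological_space"
  assumes "prob_space M" and [measurable]: "Y \<in> measurable M (count_space UNIV)"
    "D \<in> measurable M (count_space UNIV)" "Z \<in> borel_measurable M"
    and g10: "cond_prob_version M Z {\<omega>\<in>space M. Y \<omega> \<and> \<not> D \<omega>} g10"
    and g11: "cond_prob_version M Z {\<omega>\<in>space M. Y \<omega> \<and> D \<omega>} g11"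
    and Y_indep: "indep_rv M (count_space UNIV) Y borel Z"
    and "0 \<le> p10" "0 \<le> p01" and p_le: "AE \<omega> in M. p10 \<le> g10 (Z \<omega>) \<and> p01 \<le> g11 (Z \<omega>)"
    and B_sets[measurable]: "B \<in> sets borel"
  defines "w \<omega> \<equiv> roy_type_weight (Y \<omega>) (D \<omega>)
    (thinning_prob p10 (g10 (Z \<omega>))) (thinning_prob p01 (g11 (Z \<omega>)))"
  shows "(\<integral>\<omega>. w \<omega> t * indicator B (Z \<omega>) \<partial>M)
    = roy_type_law (measure M {\<omega>\<in>space M. \<not> Y \<omega>}) p01 p10 t * measure M (Z -` B \<inter> space M)"
proof -
  interpret prob_space M by fact
  have [measurable]: "g10 \<in> borel_measurable borel" "g11 \<in> borel_measurable borel"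
    using g10 g11 by (simp_all add: cond_prob_version_def)
  have [measurable]: "(\<lambda>\<omega>. w \<omega> t) \<in> borel_measurable M" for t
    unfolding w_def roy_type_weight_def thinning_prob_def by measurable
  have w_bounded: "0 \<le> w \<omega> t" "w \<omega> t \<le> 1" for \<omega> t
    unfolding w_def
    by (intro roy_type_weight_nonneg roy_type_weight_le_1 thinning_prob_bounds)+
  have w_integrable: "integrable M (\<lambda>\<omega>. w \<omega> t * indicator B (Z \<omega>))" for t
    using w_bounded by (intro integrable_const_bound[where B=1]) (auto simp: indicator_def)
  let ?P = "measure M (Z -` B \<inter> space M)"
  have "(\<integral>\<omega>. w \<omega> (False, False) * indicator B (Z \<omega>) \<partial>M)
      = (\<integral>\<omega>. indicator ({\<omega>\<in>space M. Y \<omega> = False} \<inter> Z -` B \<inter> space M) \<omega> \<partial>M)"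
    by (intro Bochner_Integration.integral_cong) (auto simp: w_def roy_type_weight_def indicator_def)
  also have "\<dots> = measure M {\<omega>\<in>space M. Y \<omega> = False} * ?P"
    using indep_rv_measure_eq[OF Y_indep B_sets, of False] by simp
  finally have FF: "(\<integral>\<omega>. w \<omega> (False, False) * indicator B (Z \<omega>) \<partial>M)
      = measure M {\<omega>\<in>space M. \<not> Y \<omega>} * ?P"
    by simp
  have "(\<integral>\<omega>. w \<omega> (False, True) * indicator B (Z \<omega>) \<partial>M)
      = (\<integral>\<omega>. indicator {\<omega>\<in>space M. Y \<omega> \<and> D \<omega>} \<omega>
           * (thinning_prob p01 (g11 (Z \<omega>)) * indicator B (Z \<omega>)) \<partial>M)"
    by (intro Bochner_Integration.integral_cong) (auto simp: w_def roy_type_weight_def indicator_def)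
  also have "\<dots> = p01 * ?P"
    using p_le \<open>0 \<le> p01\<close>
    by (intro integral_thinned_indicator[OF _ _ _ g11]) (auto elim: eventually_mono)
  finally have FT: "(\<integral>\<omega>. w \<omega> (False, True) * indicator B (Z \<omega>) \<partial>M) = p01 * ?P" .
  have "(\<integral>\<omega>. w \<omega> (True, False) * indicator B (Z \<omega>) \<partial>M)
      = (\<integral>\<omega>. indicator {\<omega>\<in>space M. Y \<omega> \<and> \<not> D \<omega>} \<omega>
           * (thinning_prob p10 (g10 (Z \<omega>)) * indicator B (Z \<omega>)) \<partial>M)"
    by (intro Bochner_Integration.integral_cong) (auto simp: w_def roy_type_weight_def indicator_def)
  also have "\<dots> = p10 * ?P"
    using p_le \<open>0 \<le> p10\<close>
    by (intro integral_thinned_indicator[OF _ _ _ g10]) (auto elim: eventually_mono)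
  finally have TF: "(\<integral>\<omega>. w \<omega> (True, False) * indicator B (Z \<omega>) \<partial>M) = p10 * ?P" .
  have "(\<Sum>t\<in>UNIV. \<integral>\<omega>. w \<omega> t * indicator B (Z \<omega>) \<partial>M)
      = (\<integral>\<omega>. (\<Sum>t\<in>UNIV. w \<omega> t) * indicator B (Z \<omega>) \<partial>M)"
    using w_integrable by (simp add: Bochner_Integration.integral_sum[symmetric] sum_distrib_right)
  also have "\<dots> = ?P"
    by (simp add: w_def sum_roy_type_weight
                  integral_indicator_vimage[OF finite_measure_axioms assms(4) B_sets])
  finally have "(\<Sum>t\<in>UNIV. \<integral>\<omega>. w \<omega> t * indicator B (Z \<omega>) \<partial>M) = ?P" .
  then have TT: "(\<integral>\<omega>. w \<omega> (True, True) * indicator B (Z \<omega>) \<partial>M)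
      = (1 - measure M {\<omega>\<in>space M. \<not> Y \<omega>} - p01 - p10) * ?P"
    using FF FT TF by (simp add: UNIV_bool_pair algebra_simps)
  show ?thesis
    using FF FT TF TT by (cases t rule: prod.exhaust[case_product bool.exhaust bool.exhaust])
      (simp_all add: roy_type_law_def)
qed

text \<open>
  The observed outcome Y = Y_D, read off the latent coordinates rather than taken as Y \<circ> fst,
  so that the outcome equation of the Roy model holds everywhere and not just almost surely.
\<close>

definition roy_outcome :: "('a \<Rightarrow> bool) \<Rightarrow> 'a \<times> bool \<times> bool \<Rightarrow> bool" where
  "roy_outcome D x = (if D (fst x) then snd (snd x) else fst (snd x))"

lemma finite_kernel_roy_type_weight:
  assumes "prob_space M" and [measurable]: "Y \<in> measurable M (count_space UNIV)"
    "D \<in> measurable M (count_space UNIV)" "a \<in> borel_measurable M" "b \<in> borel_measurable M"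
    and "\<And>\<omega>. 0 \<le> a \<omega> \<and> a \<omega> \<le> 1" "\<And>\<omega>. 0 \<le> b \<omega> \<and> b \<omega> \<le> 1"
  shows "finite_kernel M (\<lambda>\<omega>. roy_type_weight (Y \<omega>) (D \<omega>) (a \<omega>) (b \<omega>))"
proof -
  interpret prob_space M by fact
  show ?thesis
  proof
    show "(\<lambda>\<omega>. roy_type_weight (Y \<omega>) (D \<omega>) (a \<omega>) (b \<omega>) t) \<in> borel_measurable M" for t
      unfolding roy_type_weight_def by measurable
  qed (use assms in \<open>auto intro: roy_type_weight_nonneg simp: sum_roy_type_weight\<close>)
qed

lemma roy_model_compound_measure:
  fixes Z :: "'a \<Rightarrow> 'z::topological_space"
  assumes "finite_kernel M w" and w: "\<And>\<omega>. w \<omega> = roy_type_weight (Y \<omega>) (D \<omega>) (a \<omega>) (b \<omega>)"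
    and [measurable]: "Y \<in> measurable M (count_space UNIV)" "D \<in> measurable M (count_space UNIV)"
      "Z \<in> borel_measurable M"
  shows "roy_model (compound_measure M w)
           (roy_outcome D) (\<lambda>x. D (fst x)) (\<lambda>x. fst (snd x)) (\<lambda>x. snd (snd x))"
    and "roy_outcome D \<in> measurable (compound_measure M w) (count_space UNIV)"
    and "distr (compound_measure M w) (count_space UNIV \<Otimes>\<^sub>M count_space UNIV \<Otimes>\<^sub>M borel)
          (\<lambda>x. (roy_outcome D x, D (fst x), Z (fst x)))
       = distr M (count_space UNIV \<Otimes>\<^sub>M count_space UNIV \<Otimes>\<^sub>M borel) (\<lambda>\<omega>. (Y \<omega>, D \<omega>, Z \<omega>))"
proof -
  interpret finite_kernel M w by fact
  have "AE x in N. roy_outcome D x = Y (fst x)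
      \<and> (snd (snd x) \<and> \<not> fst (snd x) \<longrightarrow> D (fst x)) \<and> (fst (snd x) \<and> \<not> snd (snd x) \<longrightarrow> \<not> D (fst x))"
    by (rule AE_compound_measureI) (auto simp: w roy_outcome_def dest!: roy_type_weight_pos_imp)
  then have outcome_eq: "AE x in N. roy_outcome D x = Y (fst x)"
    and "roy_model N (roy_outcome D) (\<lambda>x. D (fst x)) (\<lambda>x. fst (snd x)) (\<lambda>x. snd (snd x))"
    by (auto simp: roy_model_def roy_outcome_def elim: eventually_mono)
  then show "roy_model N (roy_outcome D) (\<lambda>x. D (fst x)) (\<lambda>x. fst (snd x)) (\<lambda>x. snd (snd x))"
    by blast
  have "{x \<in> space N. D (fst x)} = (\<lambda>x. D (fst x)) -` {True} \<inter> space N"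
    by auto
  also have "\<dots> \<in> sets N"
    by (rule measurable_sets[OF measurable_compound_fst[OF assms(4)]]) simp
  finally show outcome_measurable: "roy_outcome D \<in> measurable N (count_space UNIV)"
    unfolding roy_outcome_def by (intro measurable_If measurable_compound_snd)
  show "distr N (count_space UNIV \<Otimes>\<^sub>M count_space UNIV \<Otimes>\<^sub>M borel)
         (\<lambda>x. (roy_outcome D x, D (fst x), Z (fst x)))
       = distr M (count_space UNIV \<Otimes>\<^sub>M count_space UNIV \<Otimes>\<^sub>M borel) (\<lambda>\<omega>. (Y \<omega>, D \<omega>, Z \<omega>))"
    using outcome_eq outcome_measurable
    by (intro distr_compound_measure_eq_distr)
       (auto elim!: eventually_mono intro: measurable_compound_fst)
qed

lemma alt_roy_model_imp_roy_model:
  assumes "alt_roy_model M Y D Y0 Y1 Y0s Y1s"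
  shows "roy_model M Y D Y0 Y1"
proof -
  have latent: "\<forall>\<omega>\<in>space M. Y0 \<omega> = (Y0s \<omega> > 0) \<and> Y1 \<omega> = (Y1s \<omega> > 0)"
    and selection: "AE \<omega> in M. (Y1s \<omega> > Y0s \<omega> \<longrightarrow> D \<omega>) \<and> (Y1s \<omega> < Y0s \<omega> \<longrightarrow> \<not> D \<omega>)"
    using assms by (auto simp: alt_roy_model_def)
  from selection have "AE \<omega> in M. (Y1 \<omega> \<and> \<not> Y0 \<omega> \<longrightarrow> D \<omega>) \<and> (Y0 \<omega> \<and> \<not> Y1 \<omega> \<longrightarrow> \<not> D \<omega>)"
    using AE_space by eventually_elim (use latent in force)
  with assms show ?thesis by (simp add: roy_model_def alt_roy_model_def)
qed

lemma roy_model_type_bounds: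
  fixes Z :: "'a \<Rightarrow> 'z::topological_space"
  assumes "prob_space M"
    and [measurable]: "Y \<in> measurable M (count_space UNIV)" "D \<in> measurable M (count_space UNIV)"
      "Z \<in> borel_measurable M"
    and g10: "cond_prob_version M Z {\<omega>\<in>space M. Y \<omega> \<and> \<not> D \<omega>} g10"
    and g11: "cond_prob_version M Z {\<omega>\<in>space M. Y \<omega> \<and> D \<omega>} g11"
    and [measurable]: "Y0 \<in> measurable M (count_space UNIV)" "Y1 \<in> measurable M (count_space UNIV)"
    and type_indep: "indep_rv M (count_space UNIV) (\<lambda>\<omega>. (Y0 \<omega>, Y1 \<omega>)) borel Z"
    and roy: "roy_model M Y D Y0 Y1"
  shows "AE z in distr M borel Z. measure M {\<omega>\<in>space M. Y0 \<omega> \<and> \<not> Y1 \<omega>} \<le> g10 z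
                                \<and> measure M {\<omega>\<in>space M. \<not> Y0 \<omega> \<and> Y1 \<omega>} \<le> g11 z"
    and "measure M {\<omega>\<in>space M. \<not> Y0 \<omega> \<and> \<not> Y1 \<omega>} = measure M {\<omega>\<in>space M. \<not> Y \<omega>}"
proof -
  interpret prob_space M by fact
  have Y_eq: "\<And>\<omega>. \<omega> \<in> space M \<Longrightarrow> Y \<omega> = (if D \<omega> then Y1 \<omega> else Y0 \<omega>)"
    and selection: "AE \<omega> in M. (Y1 \<omega> \<and> \<not> Y0 \<omega> \<longrightarrow> D \<omega>) \<and> (Y0 \<omega> \<and> \<not> Y1 \<omega> \<longrightarrow> \<not> D \<omega>)"
    using roy by (auto simp: roy_model_def)
  note type_le = prob_le_cond_prob_version[OF finite_measure_axioms assms(4) _ _ _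
      indep_rv_measure_eq[OF type_indep]]
  have "AE \<omega> in M. \<omega> \<in> {\<omega>\<in>space M. (Y0 \<omega>, Y1 \<omega>) = (True, False)}
      \<longrightarrow> \<omega> \<in> {\<omega>\<in>space M. Y \<omega> \<and> \<not> D \<omega>}"
    using selection by eventually_elim (auto simp: Y_eq)
  then have "AE z in distr M borel Z. measure M {\<omega>\<in>space M. (Y0 \<omega>, Y1 \<omega>) = (True, False)} \<le> g10 z"
    by (intro type_le[OF g10]) simp_all
  moreover have "AE \<omega> in M. \<omega> \<in> {\<omega>\<in>space M. (Y0 \<omega>, Y1 \<omega>) = (False, True)}
      \<longrightarrow> \<omega> \<in> {\<omega>\<in>space M. Y \<omega> \<and> D \<omega>}"
    using selection by eventually_elim (auto simp: Y_eq)
  then have "AE z in distr M borel Z. measure M {\<omega>\<in>space M. (Y0 \<omega>, Y1 \<omega>) = (False, True)} \<le> g11 z"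
    by (intro type_le[OF g11]) simp_all
  ultimately show "AE z in distr M borel Z. measure M {\<omega>\<in>space M. Y0 \<omega> \<and> \<not> Y1 \<omega>} \<le> g10 z
                                \<and> measure M {\<omega>\<in>space M. \<not> Y0 \<omega> \<and> Y1 \<omega>} \<le> g11 z"
    by eventually_elim simp
  show "measure M {\<omega>\<in>space M. \<not> Y0 \<omega> \<and> \<not> Y1 \<omega>} = measure M {\<omega>\<in>space M. \<not> Y \<omega>}"
  proof (rule measure_eq_AE)
    show "AE \<omega> in M. \<omega> \<in> {\<omega>\<in>space M. \<not> Y0 \<omega> \<and> \<not> Y1 \<omega>} \<longleftrightarrow> \<omega> \<in> {\<omega>\<in>space M. \<not> Y \<omega>}"
      using selection AE_space by eventually_elim (auto simp: Y_eq)
  qed measurable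
qed

lemma roy_model_sharp:
  fixes Z :: "'a \<Rightarrow> 'z::second_countable_topology"
  assumes "prob_space M"
    and [measurable]: "Y \<in> measurable M (count_space UNIV)" "D \<in> measurable M (count_space UNIV)"
      "Z \<in> borel_measurable M"
    and g10: "cond_prob_version M Z {\<omega>\<in>space M. Y \<omega> \<and> \<not> D \<omega>} g10"
    and g11: "cond_prob_version M Z {\<omega>\<in>space M. Y \<omega> \<and> D \<omega>} g11"
    and Y_indep: "indep_rv M (count_space UNIV) Y borel Z"
    and bounds: "AE z in distr M borel Z. z \<in> rv_support M Z \<longrightarrow>
            0 \<le> p10 \<and> p10 \<le> g10 z \<and> 0 \<le> p01 \<and> p01 \<le> g11 z"
    and p00: "p00 = measure M {\<omega>\<in>space M. \<not> Y \<omega>}"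
  shows "\<exists>(N :: ('a \<times> bool \<times> bool) measure) Yt Dt Zt Y0 Y1.
            prob_space N \<and>
            Yt \<in> measurable N (count_space UNIV) \<and> Dt \<in> measurable N (count_space UNIV) \<and>
            Zt \<in> borel_measurable N \<and>
            Y0 \<in> measurable N (count_space UNIV) \<and> Y1 \<in> measurable N (count_space UNIV) \<and>
            distr N (count_space UNIV \<Otimes>\<^sub>M count_space UNIV \<Otimes>\<^sub>M borel) (\<lambda>\<omega>. (Yt \<omega>, Dt \<omega>, Zt \<omega>)) =
              distr M (count_space UNIV \<Otimes>\<^sub>M count_space UNIV \<Otimes>\<^sub>M borel) (\<lambda>\<omega>. (Y \<omega>, D \<omega>, Z \<omega>)) \<and>
            indep_rv N (count_space UNIV) (\<lambda>\<omega>. (Y0 \<omega>, Y1 \<omega>)) borel Zt \<and>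
            roy_model N Yt Dt Y0 Y1 \<and>
            measure N {\<omega>\<in>space N. \<not> Y0 \<omega> \<and> \<not> Y1 \<omega>} = p00 \<and>
            measure N {\<omega>\<in>space N. \<not> Y0 \<omega> \<and> Y1 \<omega>} = p01 \<and>
            measure N {\<omega>\<in>space N. Y0 \<omega> \<and> \<not> Y1 \<omega>} = p10"
proof -
  interpret prob_space M by fact
  have [measurable]: "g10 \<in> borel_measurable borel" "g11 \<in> borel_measurable borel"
    using g10 g11 by (simp_all add: cond_prob_version_def)
  have "AE z in distr M borel Z. 0 \<le> p10 \<and> p10 \<le> g10 z \<and> 0 \<le> p01 \<and> p01 \<le> g11 z"
    using bounds AE_in_rv_support[OF finite_measure_axioms assms(4)] by eventually_elim auto
  then have p_le: "AE \<omega> in M. 0 \<le> p10 \<and> p10 \<le> g10 (Z \<omega>) \<and> 0 \<le> p01 \<and> p01 \<le> g11 (Z \<omega>)"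
    by (subst (asm) AE_distr_iff) auto
  then have "0 \<le> p10" "0 \<le> p01"
    by (auto dest: AE_E2)
  define w where "w \<omega> = roy_type_weight (Y \<omega>) (D \<omega>)
    (thinning_prob p10 (g10 (Z \<omega>))) (thinning_prob p01 (g11 (Z \<omega>)))" for \<omega>
  have kernel: "finite_kernel M w"
    unfolding w_def
    by (intro finite_kernel_roy_type_weight)
       (auto simp: thinning_prob_def thinning_prob_bounds assms(1))
  interpret K: finite_kernel M w by (fact kernel)
  have law: "(\<integral>\<omega>. w \<omega> t * indicator B (Z \<omega>) \<partial>M)
      = roy_type_law p00 p01 p10 t * measure M (Z -` B \<inter> space M)"
    if "B \<in> sets borel" for t B
    unfolding w_def p00 using p_le \<open>0 \<le> p10\<close> \<open>0 \<le> p01\<close> that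
    by (intro integral_roy_type_weight[OF assms(1-6) Y_indep]) (auto elim!: eventually_mono)
  have type_indep:
    "indep_rv K.N (count_space UNIV) (\<lambda>x. (fst (snd x), snd (snd x))) borel (\<lambda>x. Z (fst x))"
    using K.indep_rv_snd_covariate[OF assms(4) law] by simp
  have "measure K.N {x \<in> space K.N. fst (snd x) = a \<and> snd (snd x) = b}
      = roy_type_law p00 p01 p10 (a, b)" for a b
    using K.measure_snd[OF assms(4) law, of "{(a, b)}"]
    by (simp add: vimage_def Int_def conj_commute prod_eq_iff)
  note type_prob = this[of False False] this[of False True] this[of True False]
  note roy = roy_model_compound_measure[OF kernel w_def assms(2-4)]
  show ?thesis
    apply (rule exI[of _ K.N], rule exI[of _ "roy_outcome D"], rule exI[of _ "\<lambda>x. D (fst x)"],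
        rule exI[of _ "\<lambda>x. Z (fst x)"], rule exI[of _ "\<lambda>x. fst (snd x)"],
        rule exI[of _ "\<lambda>x. snd (snd x)"])
    using K.prob_space_compound_measure roy type_indep type_prob
      K.measurable_compound_snd[of fst] K.measurable_compound_snd[of snd]
      K.measurable_compound_fst[OF assms(3)] K.measurable_compound_fst[OF assms(4)]
    by (simp add: roy_type_law_def)
qed

theorem corollary1:
  fixes M :: "'a measure"
    and Y D :: "'a \<Rightarrow> bool"
    and Z :: "'a \<Rightarrow> 'z::euclidean_space"
    and g10 g11 :: "'z \<Rightarrow> real"
  assumes "prob_space M"
    and "Y \<in> measurable M (count_space UNIV)"
    and "D \<in> measurable M (count_space UNIV)"
    and "Z \<in> borel_measurable M"
    and "cond_prob_version M Z {\<omega>\<in>space M. Y \<omega> \<and> \<not> D \<omega>} g10"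
    and "cond_prob_version M Z {\<omega>\<in>space M. Y \<omega> \<and> D \<omega>} g11"
  shows
    "(\<forall>Y0 Y1 :: 'a \<Rightarrow> bool.
        Y0 \<in> measurable M (count_space UNIV) \<and> Y1 \<in> measurable M (count_space UNIV) \<and>
        indep_rv M (count_space UNIV) (\<lambda>\<omega>. (Y0 \<omega>, Y1 \<omega>)) borel Z \<and>
        (roy_model M Y D Y0 Y1 \<or>
         (\<exists>Y0s Y1s :: 'a \<Rightarrow> real. Y0s \<in> borel_measurable M \<and> Y1s \<in> borel_measurable M \<and>
            alt_roy_model M Y D Y0 Y1 Y0s Y1s))
        \<longrightarrow>
        (AE z in distr M borel Z. z \<in> rv_support M Z \<longrightarrow>
            0 \<le> measure M {\<omega>\<in>space M. Y0 \<omega> \<and> \<not> Y1 \<omega>} \<and>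
            measure M {\<omega>\<in>space M. Y0 \<omega> \<and> \<not> Y1 \<omega>} \<le> g10 z \<and>
            0 \<le> measure M {\<omega>\<in>space M. \<not> Y0 \<omega> \<and> Y1 \<omega>} \<and>
            measure M {\<omega>\<in>space M. \<not> Y0 \<omega> \<and> Y1 \<omega>} \<le> g11 z) \<and>
        measure M {\<omega>\<in>space M. \<not> Y0 \<omega> \<and> \<not> Y1 \<omega>} = measure M {\<omega>\<in>space M. \<not> Y \<omega>})
    \<and>
    (indep_rv M (count_space UNIV) Y borel Z \<longrightarrow>
      (\<forall>p00 p01 p10 :: real.
        (AE z in distr M borel Z. z \<in> rv_support M Z \<longrightarrow>
            0 \<le> p10 \<and> p10 \<le> g10 z \<and> 0 \<le> p01 \<and> p01 \<le> g11 z) \<and>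
        p00 = measure M {\<omega>\<in>space M. \<not> Y \<omega>}
        \<longrightarrow>
        (\<exists>(N :: ('a \<times> bool \<times> bool) measure) Yt Dt Zt Y0 Y1.
            prob_space N \<and>
            Yt \<in> measurable N (count_space UNIV) \<and> Dt \<in> measurable N (count_space UNIV) \<and>
            Zt \<in> borel_measurable N \<and>
            Y0 \<in> measurable N (count_space UNIV) \<and> Y1 \<in> measurable N (count_space UNIV) \<and>
            distr N (count_space UNIV \<Otimes>\<^sub>M count_space UNIV \<Otimes>\<^sub>M borel) (\<lambda>\<omega>. (Yt \<omega>, Dt \<omega>, Zt \<omega>)) =
              distr M (count_space UNIV \<Otimes>\<^sub>M count_space UNIV \<Otimes>\<^sub>M borel) (\<lambda>\<omega>. (Y \<omega>, D \<omega>, Z \<omega>)) \<and>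
            indep_rv N (count_space UNIV) (\<lambda>\<omega>. (Y0 \<omega>, Y1 \<omega>)) borel Zt \<and>
            roy_model N Yt Dt Y0 Y1 \<and>
            measure N {\<omega>\<in>space N. \<not> Y0 \<omega> \<and> \<not> Y1 \<omega>} = p00 \<and>
            measure N {\<omega>\<in>space N. \<not> Y0 \<omega> \<and> Y1 \<omega>} = p01 \<and>
            measure N {\<omega>\<in>space N. Y0 \<omega> \<and> \<not> Y1 \<omega>} = p10)))"
  apply (rule conjI)
   apply (intro allI impI, elim conjE)
  subgoal premises prems for Y0 Y1
  proof -
    have roy: "roy_model M Y D Y0 Y1"
      using prems(4) alt_roy_model_imp_roy_model by blast
    note bounds = roy_model_type_bounds[OF assms prems(1-3) roy]
    show ?thesis
      using bounds(2) by (auto intro: eventually_mono[OF bounds(1)])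
  qed
  subgoal
    using roy_model_sharp[OF assms] by blast
  done

end
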